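(* Consider a link of constant bit rate $c>0$ shared by several FIFO queues under non-preemptive strict priority scheduling, and consider the highest-priority queue, whose input flow consists of packets of positive length. Let $l^{M_l}$ denote the maximum packet length of all lower-priority queues. Then $\beta(t)=c\left(t-\frac{l^{M_l}}{c}\right)^{+}$ is neither a strict service curve nor a service curve for the highest-priority queue; that is, there exist traffic patterns for which the strict service curve inequality fails and traffic patterns and times $t\ge0$ with $A^{*}(t)<\inf_{0\le s\le t}\{A(s)+\beta(t-s)\}$, where $A,A^{*}$ are the cumulative input and output of the highest-priority queue.
   Context: $(x)^{+}=\max\{x,0\}$. Non-preemptive strict priority: whenever the link is free, it starts transmitting the head packet of the highest-priority nonempty queue; a packet in transmission is never interrupted. Packets have arrival times $a(n)$, departure times $d(n)$ and lengths $l(n)>0$ bits. By convention, a packet is said to have arrived (respectively, been served) when and only when its last bit has arrived (respectively, departed). $A(t)$ is the cumulative amount of traffic (sum of packet lengths) of the highest-priority flow that has arrived in $[0,t)$ and $A^{*}(t)$ the amount that has been served in $[0,t)$; $A(0)=A^{*}(0)=0$, $A(s,t)=A(t)-A(s)$, $A^{*}(s,t)=A^{*}(t)-A^{*}(s)$. Queues have infinite buffers and are initially empty. With $\mathcal{F}_0$ the set of nonnegative nondecreasing functions vanishing at $0$, $\beta\in\mathcal{F}_0$ is a service curve if $A^{*}(t)\ge\inf_{0\le s\le t}\{A(s)+\beta(t-s)\}$ for all $t\ge0$, and a strict service curve if for every backlogged period $(s,t]$ of the queue, $A^{*}(s,t)\ge\beta(t-s)$. *)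

theory Defs
  imports Complex_Main
begin

text \<open>
A finite packet trace on a link of constant rate c: packets are indexed by i < N.
Packet i belongs to queue q i (priority class; 0 = highest priority, larger = lower),
its last bit arrives at a i, it has length l i > 0 (bits), its transmission starts at
b i and it departs (last bit leaves) at  b i + l i / c.
\<close>

definition dep :: "real \<Rightarrow> (nat \<Rightarrow> real) \<Rightarrow> (nat \<Rightarrow> real) \<Rightarrow> nat \<Rightarrow> real" where
  "dep c l b i = b i + l i / c"

definition npsp_valid ::
  "real \<Rightarrow> nat \<Rightarrow> (nat \<Rightarrow> nat) \<Rightarrow> (nat \<Rightarrow> real) \<Rightarrow> (nat \<Rightarrow> real) \<Rightarrow> (nat \<Rightarrow> real) \<Rightarrow> bool" where
  "npsp_valid c N q a l b \<longleftrightarrow>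
     0 < c \<and>
     (\<forall>i<N. 0 \<le> a i \<and> a i \<le> b i \<and> 0 < l i) \<and>
     \<comment> \<open>one packet at a time, never interrupted\<close>
     (\<forall>i<N. \<forall>j<N. i \<noteq> j \<longrightarrow> dep c l b i \<le> b j \<or> dep c l b j \<le> b i) \<and>
     \<comment> \<open>work conserving: the link is busy whenever some arrived packet waits\<close>
     (\<forall>t. (\<exists>i<N. a i \<le> t \<and> t < b i) \<longrightarrow> (\<exists>j<N. b j \<le> t \<and> t < dep c l b j)) \<and>
     \<comment> \<open>strict priority: a higher-priority packet present when a transmission starts goes first\<close>
     (\<forall>i<N. \<forall>j<N. q i < q j \<and> a i \<le> b j \<longrightarrow> b i < b j) \<and>
     \<comment> \<open>FIFO inside each queue\<close>
     (\<forall>i<N. \<forall>j<N. q i = q j \<and> a i < a j \<longrightarrow> b i < b j)"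

definition arr0 :: "nat \<Rightarrow> (nat \<Rightarrow> nat) \<Rightarrow> (nat \<Rightarrow> real) \<Rightarrow> (nat \<Rightarrow> real) \<Rightarrow> real \<Rightarrow> real" where
  "arr0 N q a l t = (\<Sum>i\<in>{i. i < N \<and> q i = 0 \<and> a i < t}. l i)"

definition dep0 :: "real \<Rightarrow> nat \<Rightarrow> (nat \<Rightarrow> nat) \<Rightarrow> (nat \<Rightarrow> real) \<Rightarrow> (nat \<Rightarrow> real) \<Rightarrow> real \<Rightarrow> real" where
  "dep0 c N q l b t = (\<Sum>i\<in>{i. i < N \<and> q i = 0 \<and> dep c l b i < t}. l i)"

text \<open>Maximum packet length over all lower-priority queues (assumed nonempty).\<close>
definition low_max_len :: "nat \<Rightarrow> (nat \<Rightarrow> nat) \<Rightarrow> (nat \<Rightarrow> real) \<Rightarrow> real" where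
  "low_max_len N q l = Max (l ` {i. i < N \<and> 0 < q i})"

definition beta_np :: "real \<Rightarrow> real \<Rightarrow> real \<Rightarrow> real" where
  "beta_np c lM t = c * max (t - lM / c) 0"

definition strict_service_curve :: "(real \<Rightarrow> real) \<Rightarrow> (real \<Rightarrow> real) \<Rightarrow> (real \<Rightarrow> real) \<Rightarrow> bool" where
  "strict_service_curve A As \<beta> \<longleftrightarrow>
     (\<forall>s t. 0 \<le> s \<and> s < t \<and> (\<forall>u. s < u \<and> u \<le> t \<longrightarrow> As u < A u)
        \<longrightarrow> \<beta> (t - s) \<le> As t - As s)"

definition service_curve :: "(real \<Rightarrow> real) \<Rightarrow> (real \<Rightarrow> real) \<Rightarrow> (real \<Rightarrow> real) \<Rightarrow> bool" where
  "service_curve A As \<beta> \<longleftrightarrow>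
     (\<forall>t\<ge>0. Inf ((\<lambda>s. A s + \<beta> (t - s)) ` {0..t}) \<le> As t)"

end

theory Submission
  imports Defs
begin

text \<open>
  A highest-priority packet that arrives while a lower-priority packet of maximal length
  l is on the link has to wait for the rest of that transmission and then for its own;
  only when its last bit has left is it counted in A*. Take two packets of length l: the
  lower-priority one is sent on [0, l/c], the highest-priority one arrives at l/(2c) and is
  sent on [l/c, 2l/c]. The queue is backlogged on (l/(2c), 2l/c] with A* = 0 there,
  whereas \<beta> grows to l/2 over that interval and A + \<beta>(2l/c - \<cdot>) never drops below l/2.
\<close>

lemma arr0_eq_sum: "arr0 N q a l t = (\<Sum>i<N. if q i = 0 \<and> a i < t then l i else 0)"
proof -
  have "{i. i < N \<and> q i = 0 \<and> a i < t} = {i \<in> {..<N}. q i = 0 \<and> a i < t}" by auto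
  then show ?thesis unfolding arr0_def by (simp only: sum.inter_filter finite_lessThan)
qed

lemma dep0_eq_sum: "dep0 c N q l b t = (\<Sum>i<N. if q i = 0 \<and> dep c l b i < t then l i else 0)"
proof -
  have "{i. i < N \<and> q i = 0 \<and> dep c l b i < t} = {i \<in> {..<N}. q i = 0 \<and> dep c l b i < t}"
    by auto
  then show ?thesis unfolding dep0_def by (simp only: sum.inter_filter finite_lessThan)
qed

lemma beta_np_nonneg: "0 \<le> c \<Longrightarrow> 0 \<le> beta_np c lM t"
  by (simp add: beta_np_def)

lemma beta_np_eq:
  assumes "0 < c" and "lM / c \<le> t"
  shows "beta_np c lM t = c * t - lM"
  using assms by (simp add: beta_np_def max_def right_diff_distrib)

lemma not_strict_service_curveI:
  assumes "0 \<le> s" "s < t" "\<And>u. s < u \<Longrightarrow> u \<le> t \<Longrightarrow> As u < A u"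
    and "As t - As s < \<beta> (t - s)"
  shows "\<not> strict_service_curve A As \<beta>"
  using assms unfolding strict_service_curve_def by force

lemma less_Inf_service_bound:
  fixes A \<beta> :: "real \<Rightarrow> real"
  assumes "0 \<le> t" "y < m" "\<And>s. 0 \<le> s \<Longrightarrow> s \<le> t \<Longrightarrow> m \<le> A s + \<beta> (t - s)"
  shows "y < Inf ((\<lambda>s. A s + \<beta> (t - s)) ` {0..t})"
proof -
  have "m \<le> Inf ((\<lambda>s. A s + \<beta> (t - s)) ` {0..t})"
    using assms by (intro cInf_greatest) auto
  then show ?thesis using \<open>y < m\<close> by linarith
qed

definition witness_queue :: "nat \<Rightarrow> nat" where
  "witness_queue i = (if i = 0 then 0 else 1)"

definition witness_arrival :: "real \<Rightarrow> real \<Rightarrow> nat \<Rightarrow> real" where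
  "witness_arrival c lM i = (if i = 0 then lM / (2 * c) else 0)"

definition witness_length :: "real \<Rightarrow> nat \<Rightarrow> real" where
  "witness_length lM i = lM"

definition witness_start :: "real \<Rightarrow> real \<Rightarrow> nat \<Rightarrow> real" where
  "witness_start c lM i = (if i = 0 then lM / c else 0)"

abbreviation witness_arr0 :: "real \<Rightarrow> real \<Rightarrow> real \<Rightarrow> real" where
  "witness_arr0 c lM \<equiv> arr0 2 witness_queue (witness_arrival c lM) (witness_length lM)"

abbreviation witness_dep0 :: "real \<Rightarrow> real \<Rightarrow> real \<Rightarrow> real" where
  "witness_dep0 c lM \<equiv> dep0 c 2 witness_queue (witness_length lM) (witness_start c lM)"

lemma witness_dep:
  "dep c (witness_length lM) (witness_start c lM) i = (if i = 0 then 2 * (lM / c) else lM / c)"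
  by (simp add: dep_def witness_length_def witness_start_def)

lemma witness_arr0_eq: "witness_arr0 c lM t = (if lM / (2 * c) < t then lM else 0)"
  by (simp add: arr0_eq_sum numeral_2_eq_2 witness_queue_def witness_arrival_def
      witness_length_def)

lemma witness_dep0_eq: "witness_dep0 c lM t = (if 2 * (lM / c) < t then lM else 0)"
  by (simp add: dep0_eq_sum numeral_2_eq_2 witness_queue_def witness_dep witness_length_def)

lemma witness_low_max_len: "low_max_len 2 witness_queue (witness_length lM) = lM"
proof -
  have "{i. i < 2 \<and> 0 < witness_queue i} = {1}"
    by (auto simp: witness_queue_def less_2_cases_iff)
  then show ?thesis by (simp add: low_max_len_def witness_length_def)
qed

lemma witness_npsp_valid:
  assumes "0 < c" "0 < lM"
  shows "npsp_valid c 2 witness_queue (witness_arrival c lM) (witness_length lM) (witness_start c lM)"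
proof -
  have half: "0 < lM / (2 * c)" "lM / (2 * c) < lM / c"
    using assms by (auto simp: divide_strict_left_mono)
  have work_conserving: "\<exists>j<2. witness_start c lM j \<le> t
      \<and> t < dep c (witness_length lM) (witness_start c lM) j"
    if "\<exists>i<2. witness_arrival c lM i \<le> t \<and> t < witness_start c lM i" for t
  proof -
    from that have "0 \<le> t" "t < lM / c"
      using half by (auto simp: less_2_cases_iff witness_arrival_def witness_start_def)
    then show ?thesis
      by (intro exI[of _ 1]) (simp add: witness_start_def witness_dep)
  qed
  show ?thesis
    unfolding npsp_valid_def
    using assms half work_conserving
    by (auto simp: less_2_cases_iff witness_queue_def witness_arrival_def witness_length_def
        witness_start_def witness_dep)
qed

lemma witness_not_strict_service_curve:
  assumes "0 < c" "0 < lM"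
  shows "\<not> strict_service_curve (witness_arr0 c lM) (witness_dep0 c lM) (beta_np c lM)"
proof (rule not_strict_service_curveI)
  show "0 \<le> lM / (2 * c)" "lM / (2 * c) < 2 * (lM / c)"
    using assms by (auto simp: field_simps)
  show "witness_dep0 c lM u < witness_arr0 c lM u"
    if "lM / (2 * c) < u" "u \<le> 2 * (lM / c)" for u
    using that assms by (simp add: witness_arr0_eq witness_dep0_eq)
  have "beta_np c lM (2 * (lM / c) - lM / (2 * c)) = lM / 2"
    using assms by (subst beta_np_eq) (auto simp: field_simps)
  then show "witness_dep0 c lM (2 * (lM / c)) - witness_dep0 c lM (lM / (2 * c))
      < beta_np c lM (2 * (lM / c) - lM / (2 * c))"
    using assms by (simp add: witness_dep0_eq)
qed

lemma witness_service_bound: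
  assumes "0 < c" "0 \<le> lM" "0 \<le> s" "s \<le> 2 * (lM / c)"
  shows "lM / 2 \<le> witness_arr0 c lM s + beta_np c lM (2 * (lM / c) - s)"
proof (cases "lM / (2 * c) < s")
  case True
  then show ?thesis using assms beta_np_nonneg[of c lM] by (simp add: witness_arr0_eq)
next
  case False
  then have "lM / c \<le> 2 * (lM / c) - s" "lM / 2 \<le> c * (2 * (lM / c) - s) - lM"
    using assms by (auto simp: field_simps)
  then show ?thesis using False assms by (simp add: witness_arr0_eq beta_np_eq)
qed

theorem proposition3:
  fixes c lM :: real
  assumes "0 < c" and "0 < lM"
  shows "(\<exists>N q a l b. npsp_valid c N q a l b \<and> (\<exists>i<N. 0 < q i) \<and> low_max_len N q l = lM \<and>
            \<not> strict_service_curve (arr0 N q a l) (dep0 c N q l b) (beta_np c lM))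
       \<and> (\<exists>N q a l b. npsp_valid c N q a l b \<and> (\<exists>i<N. 0 < q i) \<and> low_max_len N q l = lM \<and>
            (\<exists>t\<ge>0. dep0 c N q l b t
                     < Inf ((\<lambda>s. arr0 N q a l s + beta_np c lM (t - s)) ` {0..t})))"
proof -
  let ?t = "2 * (lM / c)"
  have witness: "npsp_valid c 2 witness_queue (witness_arrival c lM) (witness_length lM)
      (witness_start c lM) \<and> (\<exists>i<2. 0 < witness_queue i)
      \<and> low_max_len 2 witness_queue (witness_length lM) = lM"
    using assms witness_npsp_valid witness_low_max_len by (auto simp: witness_queue_def)
  have "0 \<le> ?t" using assms by simp
  moreover have "witness_dep0 c lM ?t
      < Inf ((\<lambda>s. witness_arr0 c lM s + beta_np c lM (?t - s)) ` {0..?t})"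
    using \<open>0 \<le> ?t\<close> assms witness_service_bound
    by (intro less_Inf_service_bound[where m = "lM / 2"]) (auto simp: witness_dep0_eq)
  ultimately show ?thesis
    using witness witness_not_strict_service_curve[OF assms] by blast
qed

end
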